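(* Let $v$ and $g$ be independent real random variables, where $v\sim\mathrm{Rayleigh}(1)$ and $g\sim\mathrm{Normal}(0,1)$. Then for all $\alpha,\beta\in\mathbb R$, $$\mathbb P\big(\alpha v+\beta v^{-1}>g\big)=\begin{cases}1-\dfrac{\sqrt{\alpha^2+1}-\alpha}{2\sqrt{\alpha^2+1}}\,e^{-\beta\left(\alpha+\sqrt{\alpha^2+1}\right)}, & \beta\ge0,\\[2ex] \dfrac{\sqrt{\alpha^2+1}+\alpha}{2\sqrt{\alpha^2+1}}\,e^{\beta/\left(\alpha+\sqrt{\alpha^2+1}\right)}, & \beta<0.\end{cases}$$
   Context: $\mathrm{Rayleigh}(1)$ denotes the distribution on $(0,\infty)$ with density $v e^{-v^2/2}$. *)

theory Defs
  imports "HOL-Probability.Probability"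
begin

definition rayleigh_density :: "real \<Rightarrow> real" where
  "rayleigh_density v = (if v > 0 then v * exp (- v\<^sup>2 / 2) else 0)"

end

theory Submission
  imports Defs "HOL-Real_Asymp.Real_Asymp"
begin

text \<open>
  Conditioning on \<open>V = v\<close>, the probability is the integral over \<open>v > 0\<close> of
  \<open>v exp(-v\<^sup>2/2) \<Phi>(\<alpha>v + \<beta>/v)\<close>. With \<open>s = sqrt(\<alpha>\<^sup>2 + 1)\<close>, the exponent
  \<open>-v\<^sup>2/2 - (\<alpha>v + \<beta>/v)\<^sup>2/2\<close> differs from \<open>-(sv - \<beta>/v)\<^sup>2/2\<close> and from \<open>-(sv + \<beta>/v)\<^sup>2/2\<close>
  only by the constants \<open>-(\<alpha> + s)\<beta>\<close> and \<open>(s - \<alpha>)\<beta>\<close>. This makes the integrand the exact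
  derivative of \<open>-exp(-v\<^sup>2/2) \<Phi>(\<alpha>v + \<beta>/v) + c\<^sub>1 \<Phi>(sv - \<beta>/v) + c\<^sub>2 \<Phi>(sv + \<beta>/v)\<close> for suitable
  constants \<open>c\<^sub>1, c\<^sub>2\<close>, and the probability is the difference of its limits at \<open>\<infinity>\<close> and at \<open>0\<^sup>+\<close>.
  At \<open>0\<^sup>+\<close> the term \<open>\<beta>/v\<close> dominates, which is where the case distinction on the sign of
  \<open>\<beta>\<close> comes from.
\<close>

definition std_normal_cdf :: "real \<Rightarrow> real" where
  "std_normal_cdf = cdf (density lborel std_normal_density)"

interpretation std_normal: real_distribution "density lborel std_normal_density"
  by (simp add: real_distribution_def real_distribution_axioms_def prob_space_normal_density)

lemma isCont_std_normal_density [continuous_intros]: "isCont std_normal_density x"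
  unfolding normal_density_def by (intro continuous_intros) auto

lemma std_normal_singleton_null: "{x} \<in> null_sets (density lborel std_normal_density)"
proof -
  have "AE y in lborel. y \<in> {x} \<longrightarrow> std_normal_density y = 0"
    using AE_lborel_singleton [of x] by eventually_elim simp
  then show ?thesis
    by (simp add: null_sets_density_iff)
qed

lemma std_normal_cdf_nonneg: "0 \<le> std_normal_cdf x"
  unfolding std_normal_cdf_def
  by (rule std_normal.cdf_nonneg)

lemma std_normal_cdf_le_1: "std_normal_cdf x \<le> 1"
  unfolding std_normal_cdf_def
  by (rule std_normal.cdf_bounded_prob)

lemma std_normal_cdf_at_top: "(std_normal_cdf \<longlongrightarrow> 1) at_top"
  unfolding std_normal_cdf_def
  by (rule std_normal.cdf_lim_at_top_prob)

lemma std_normal_cdf_at_bot: "(std_normal_cdf \<longlongrightarrow> 0) at_bot"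
  unfolding std_normal_cdf_def
  by (rule std_normal.cdf_lim_at_bot)

lemma std_normal_cdf_diff:
  assumes "a \<le> b"
  shows "std_normal_cdf b - std_normal_cdf a = integral {a..b} std_normal_density"
proof -
  let ?N = "density lborel std_normal_density"
  have cont: "continuous_on {a..b} std_normal_density"
    by (intro continuous_at_imp_continuous_on ballI isCont_std_normal_density)
  have "std_normal_cdf b - std_normal_cdf a = measure ?N {a<..b}"
    using assms unfolding std_normal_cdf_def
    by (cases "a = b") (simp_all add: std_normal.cdf_diff_eq)
  also have "{a<..b} = {a..b} - {a}"
    by auto
  also have "measure ?N \<dots> = measure ?N {a..b}"
    by (simp add: measure_Diff_null_set std_normal_singleton_null)
  also have "\<dots> = integral {a..b} std_normal_density"
  proof -
    have "(std_normal_density has_integral integral {a..b} std_normal_density) {a..b}"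
      using cont by (intro integrable_integral integrable_continuous_interval)
    moreover have "0 \<le> integral {a..b} std_normal_density"
      by (intro integral_nonneg integrable_continuous_interval cont) simp
    ultimately show ?thesis
      by (simp add: measure_def emeasure_density nn_integral_has_integral_lebesgue')
  qed
  finally show ?thesis .
qed

lemma DERIV_std_normal_cdf: "(std_normal_cdf has_real_derivative std_normal_density t) (at t)"
proof -
  have cont: "continuous_on {t - 1..t + 1} std_normal_density"
    by (intro continuous_at_imp_continuous_on ballI isCont_std_normal_density)
  have "((\<lambda>x. integral {t - 1..x} std_normal_density) has_real_derivative std_normal_density t) (at t)"
    using integral_has_real_derivative [OF cont, of t] by (simp add: at_within_Icc_at)
  then have "((\<lambda>x. std_normal_cdf (t - 1) + integral {t - 1..x} std_normal_density)
      has_real_derivative std_normal_density t) (at t)"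
    by (auto intro!: derivative_eq_intros)
  then show ?thesis
    by (rule has_field_derivative_transform_within_open [where S = "{t - 1<..<t + 1}"])
       (auto simp: std_normal_cdf_diff [symmetric])
qed

lemma DERIV_std_normal_cdf_compose [derivative_intros]:
  assumes "(f has_real_derivative f') (at x within S)"
  shows "((\<lambda>x. std_normal_cdf (f x)) has_real_derivative std_normal_density (f x) * f') (at x within S)"
  using DERIV_chain2 [OF DERIV_std_normal_cdf assms] .

lemma isCont_std_normal_cdf [continuous_intros]: "isCont std_normal_cdf x"
  using DERIV_std_normal_cdf DERIV_isCont by blast

lemma std_normal_cdf_minus: "std_normal_cdf (- x) = 1 - std_normal_cdf x"
proof -
  let ?S = "\<lambda>x. std_normal_cdf x + std_normal_cdf (- x)"
  have "\<forall>x. (?S has_real_derivative 0) (at x)"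
    using DERIV_add [OF DERIV_std_normal_cdf DERIV_std_normal_cdf_compose [OF DERIV_minus [OF DERIV_ident]]]
    by (simp add: normal_density_def)
  then have const: "?S = (\<lambda>_. ?S x)"
    by (intro ext DERIV_isconst_all)
  have "(?S \<longlongrightarrow> 1 + 0) at_top"
    by (intro tendsto_add std_normal_cdf_at_top filterlim_compose [OF std_normal_cdf_at_bot]
        filterlim_uminus_at_bot_at_top)
  then have "((\<lambda>_. ?S x) \<longlongrightarrow> 1) (at_top :: real filter)"
    by (simp only: const add_0_right)
  then show ?thesis
    by (simp add: tendsto_const_iff)
qed

definition heaviside :: "real \<Rightarrow> real" where
  "heaviside b = (if b > 0 then 1 else if b < 0 then 0 else 1 / 2)"

lemma std_normal_cdf_tendsto_at_right_0:
  "((\<lambda>v. std_normal_cdf (c * v + b / v)) \<longlongrightarrow> heaviside b) (at_right 0)"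
proof (cases b "0 :: real" rule: linorder_cases)
  case less
  have "filterlim (\<lambda>v. c * v + b / v) at_bot (at_right 0)"
    using less by real_asymp
  then show ?thesis
    using less by (simp add: heaviside_def filterlim_compose [OF std_normal_cdf_at_bot])
next
  case equal
  have "((\<lambda>v. std_normal_cdf (c * v)) \<longlongrightarrow> std_normal_cdf (c * 0)) (at_right 0)"
    by (intro tendsto_intros isCont_tendsto_compose [OF isCont_std_normal_cdf])
  moreover have "std_normal_cdf 0 = 1 / 2"
    using std_normal_cdf_minus [of 0] by simp
  ultimately show ?thesis
    using equal by (simp add: heaviside_def)
next
  case greater
  have "filterlim (\<lambda>v. c * v + b / v) at_top (at_right 0)"
    using greater by real_asymp
  then show ?thesis
    using greater by (simp add: heaviside_def filterlim_compose [OF std_normal_cdf_at_top])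
qed

lemma std_normal_cdf_tendsto_at_top:
  assumes "c > 0"
  shows "((\<lambda>v. std_normal_cdf (c * v + b / v)) \<longlongrightarrow> 1) at_top"
  by (rule filterlim_compose [OF std_normal_cdf_at_top]) (use assms in real_asymp)

lemma std_normal_density_shift:
  assumes s: "s\<^sup>2 = a\<^sup>2 + 1" and v: "v \<noteq> 0"
  shows "exp (- (a + s) * b) * std_normal_density (s * v + - b / v) =
      exp (- v\<^sup>2 / 2) * std_normal_density (a * v + b / v)"
    and "exp ((s - a) * b) * std_normal_density (s * v + b / v) =
      exp (- v\<^sup>2 / 2) * std_normal_density (a * v + b / v)"
proof -
  have "- v\<^sup>2 / 2 - (a * v + b / v)\<^sup>2 / 2 = - (a + s) * b - (s * v + - b / v)\<^sup>2 / 2"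
    using v by (simp add: power2_sum power2_diff power_mult_distrib power_divide s; simp add: field_simps)
  moreover have "- v\<^sup>2 / 2 - (a * v + b / v)\<^sup>2 / 2 = (s - a) * b - (s * v + b / v)\<^sup>2 / 2"
    using v by (simp add: power2_sum power_mult_distrib power_divide s; simp add: field_simps)
  ultimately show "exp (- (a + s) * b) * std_normal_density (s * v + - b / v) =
      exp (- v\<^sup>2 / 2) * std_normal_density (a * v + b / v)"
    and "exp ((s - a) * b) * std_normal_density (s * v + b / v) =
      exp (- v\<^sup>2 / 2) * std_normal_density (a * v + b / v)"
    by (simp_all add: std_normal_density_def mult.left_commute [of _ "1 / _"] exp_add [symmetric])
qed

text \<open>The argument \<open>s * v + - b / v\<close> is kept in the shape \<open>c * v + b / v\<close> of the limit lemmas above.\<close>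

definition rayleigh_normal_primitive :: "real \<Rightarrow> real \<Rightarrow> real \<Rightarrow> real \<Rightarrow> real" where
  "rayleigh_normal_primitive a b s v =
     - exp (- v\<^sup>2 / 2) * std_normal_cdf (a * v + b / v)
     + (a - s) / (2 * s) * exp (- (a + s) * b) * std_normal_cdf (s * v + - b / v)
     + (a + s) / (2 * s) * exp ((s - a) * b) * std_normal_cdf (s * v + b / v)"

lemma DERIV_rayleigh_normal_primitive:
  assumes s: "s > 0" "s\<^sup>2 = a\<^sup>2 + 1" and v: "v > 0"
  shows "(rayleigh_normal_primitive a b s has_real_derivative
      rayleigh_density v * std_normal_cdf (a * v + b / v)) (at v)"
proof -
  let ?e = "exp (- v\<^sup>2 / 2)" and ?\<Phi> = "std_normal_cdf (a * v + b / v)"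
  let ?\<phi>\<^sub>0 = "std_normal_density (a * v + b / v)" and ?w = "b / v\<^sup>2"
  let ?\<phi>\<^sub>1 = "std_normal_density (s * v + - b / v)" and ?e\<^sub>1 = "exp (- (a + s) * b)"
  let ?\<phi>\<^sub>2 = "std_normal_density (s * v + b / v)" and ?e\<^sub>2 = "exp ((s - a) * b)"
  let ?c\<^sub>1 = "(a - s) / (2 * s)" and ?c\<^sub>2 = "(a + s) / (2 * s)"
  have inner: "((\<lambda>v. c * v + d / v) has_real_derivative c - d / v\<^sup>2) (at v)" for c d
    using v by (auto intro!: derivative_eq_intros simp: power2_eq_square field_simps)
  note cdf = DERIV_std_normal_cdf_compose [OF inner]
  have gauss: "((\<lambda>v. - exp (- v\<^sup>2 / 2)) has_real_derivative v * ?e) (at v)"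
    by (auto intro!: derivative_eq_intros)
  have "(rayleigh_normal_primitive a b s has_real_derivative
      v * ?e * ?\<Phi> + ?\<phi>\<^sub>0 * (a - ?w) * - ?e
      + ?c\<^sub>1 * ?e\<^sub>1 * (?\<phi>\<^sub>1 * (s - - b / v\<^sup>2)) + ?c\<^sub>2 * ?e\<^sub>2 * (?\<phi>\<^sub>2 * (s - ?w))) (at v)"
    unfolding rayleigh_normal_primitive_def [abs_def]
    by (intro DERIV_add DERIV_mult gauss DERIV_cmult cdf)
  also have "v * ?e * ?\<Phi> + ?\<phi>\<^sub>0 * (a - ?w) * - ?e
      + ?c\<^sub>1 * ?e\<^sub>1 * (?\<phi>\<^sub>1 * (s - - b / v\<^sup>2)) + ?c\<^sub>2 * ?e\<^sub>2 * (?\<phi>\<^sub>2 * (s - ?w))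
    = v * ?e * ?\<Phi> - ?e * ?\<phi>\<^sub>0 * (a - ?w) + ?c\<^sub>1 * (s + ?w) * (?e\<^sub>1 * ?\<phi>\<^sub>1) + ?c\<^sub>2 * (s - ?w) * (?e\<^sub>2 * ?\<phi>\<^sub>2)"
    using s v by (simp add: field_simps)
  also have "\<dots> = v * ?e * ?\<Phi> + ?e * ?\<phi>\<^sub>0 * (?c\<^sub>1 * (s + ?w) + ?c\<^sub>2 * (s - ?w) - (a - ?w))"
    using s v by (simp only: std_normal_density_shift) (simp add: algebra_simps)
  also have "?c\<^sub>1 * (s + ?w) + ?c\<^sub>2 * (s - ?w) - (a - ?w) = 0"
    using s v by (simp add: field_simps)
  finally show ?thesis
    using v by (simp add: rayleigh_density_def)
qed

lemma rayleigh_normal_primitive_at_top: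
  assumes "s > 0"
  shows "(rayleigh_normal_primitive a b s \<longlongrightarrow>
      (a - s) / (2 * s) * exp (- (a + s) * b) + (a + s) / (2 * s) * exp ((s - a) * b)) at_top"
proof -
  have "((\<lambda>v. exp (- v\<^sup>2 / 2) * std_normal_cdf (a * v + b / v)) \<longlongrightarrow> 0) at_top"
  proof (rule tendsto_sandwich [where f = "\<lambda>_. 0" and h = "\<lambda>v. exp (- v\<^sup>2 / 2)"])
    show "\<forall>\<^sub>F v in at_top. 0 \<le> exp (- v\<^sup>2 / 2) * std_normal_cdf (a * v + b / v)"
      by (simp add: std_normal_cdf_nonneg)
    show "\<forall>\<^sub>F v in at_top. exp (- v\<^sup>2 / 2) * std_normal_cdf (a * v + b / v) \<le> exp (- v\<^sup>2 / 2)"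
      by (simp add: std_normal_cdf_le_1)
    show "((\<lambda>v::real. exp (- v\<^sup>2 / 2)) \<longlongrightarrow> 0) at_top"
      by real_asymp
  qed simp
  then have "(rayleigh_normal_primitive a b s \<longlongrightarrow>
      - 0 + (a - s) / (2 * s) * exp (- (a + s) * b) * 1 + (a + s) / (2 * s) * exp ((s - a) * b) * 1) at_top"
    unfolding rayleigh_normal_primitive_def [abs_def] minus_mult_left [symmetric]
    by (intro tendsto_intros std_normal_cdf_tendsto_at_top assms)
  then show ?thesis
    by simp
qed

lemma rayleigh_normal_primitive_at_right_0:
  "(rayleigh_normal_primitive a b s \<longlongrightarrow>
      - heaviside b + (a - s) / (2 * s) * exp (- (a + s) * b) * heaviside (- b)
        + (a + s) / (2 * s) * exp ((s - a) * b) * heaviside b) (at_right 0)"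
proof -
  have "((\<lambda>v::real. exp (- v\<^sup>2 / 2)) \<longlongrightarrow> 1) (at_right 0)"
    by real_asymp
  then have "(rayleigh_normal_primitive a b s \<longlongrightarrow>
      - (1 * heaviside b) + (a - s) / (2 * s) * exp (- (a + s) * b) * heaviside (- b)
        + (a + s) / (2 * s) * exp ((s - a) * b) * heaviside b) (at_right 0)"
    unfolding rayleigh_normal_primitive_def [abs_def] minus_mult_left [symmetric]
    by (intro tendsto_intros std_normal_cdf_tendsto_at_right_0)
  then show ?thesis
    by simp
qed

lemma set_integral_Ioi_FTC_nonneg:
  fixes f F :: "real \<Rightarrow> real"
  assumes "\<And>x. x > 0 \<Longrightarrow> (F has_real_derivative f x) (at x)"
    and "\<And>x. x > 0 \<Longrightarrow> isCont f x"
    and "\<And>x. x > 0 \<Longrightarrow> 0 \<le> f x"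
    and "(F \<longlongrightarrow> A) (at_right 0)"
    and "(F \<longlongrightarrow> B) at_top"
  shows "set_integrable lborel {0<..} f" and "(LBINT x:{0<..}. f x) = B - A"
proof -
  have Ioi: "einterval 0 \<infinity> = {0<..}"
    by (auto simp: einterval_def zero_ereal_def)
  have "((F \<circ> real_of_ereal) \<longlongrightarrow> A) (at_right 0)" "((F \<circ> real_of_ereal) \<longlongrightarrow> B) (at_left \<infinity>)"
    using assms(4,5) by (simp_all add: zero_ereal_def ereal_tendsto_simps1)
  note FTC = interval_integral_FTC_nonneg [of 0 \<infinity> F f A B, OF _ _ _ _ this]
  from FTC show "set_integrable lborel {0<..} f" and "(LBINT x:{0<..}. f x) = B - A"
    using assms(1-3)
    by (simp_all add: Ioi interval_lebesgue_integral_def zero_ereal_def)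
qed

lemma isCont_rayleigh_density [continuous_intros]:
  assumes "x > 0"
  shows "isCont rayleigh_density x"
proof -
  have "\<forall>\<^sub>F v in nhds x. v * exp (- v\<^sup>2 / 2) = rayleigh_density v"
    using eventually_nhds_in_open [of "{0<..}" x] assms
    by (auto simp: rayleigh_density_def elim!: eventually_mono)
  moreover have "isCont (\<lambda>v. v * exp (- v\<^sup>2 / 2)) x"
    by (auto intro!: continuous_intros)
  ultimately show ?thesis
    by (rule isCont_cong [THEN iffD1])
qed

lemma rayleigh_density_nonneg: "0 \<le> rayleigh_density v"
  by (simp add: rayleigh_density_def)

lemma borel_measurable_rayleigh_density [measurable]: "rayleigh_density \<in> borel_measurable borel"
  unfolding rayleigh_density_def [abs_def] by measurable

lemma integral_rayleigh_std_normal_cdf: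
  fixes a b :: real
  defines "s \<equiv> sqrt (a\<^sup>2 + 1)"
  shows "integrable lborel (\<lambda>v. rayleigh_density v * std_normal_cdf (a * v + b / v))"
    and "(\<integral>v. rayleigh_density v * std_normal_cdf (a * v + b / v) \<partial>lborel) =
      (if b \<ge> 0 then 1 + (a - s) / (2 * s) * exp (- (a + s) * b) else (a + s) / (2 * s) * exp ((s - a) * b))"
proof -
  let ?g = "\<lambda>v. rayleigh_density v * std_normal_cdf (a * v + b / v)"
  have s: "s > 0" "s\<^sup>2 = a\<^sup>2 + 1"
    unfolding s_def by (auto intro: add_nonneg_pos)
  note FTC = set_integral_Ioi_FTC_nonneg [of "rayleigh_normal_primitive a b s" ?g,
      OF DERIV_rayleigh_normal_primitive [OF s] _ _
         rayleigh_normal_primitive_at_right_0 rayleigh_normal_primitive_at_top [OF s(1)]]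
  have g: "?g = (\<lambda>v. indicator {0<..} v *\<^sub>R ?g v)"
    by (auto simp: rayleigh_density_def indicator_def)
  have "set_integrable lborel {0<..} ?g"
    by (rule FTC) (auto intro!: continuous_intros isCont_o2 [OF _ isCont_std_normal_cdf]
        simp: rayleigh_density_nonneg std_normal_cdf_nonneg)
  then show "integrable lborel ?g"
    unfolding set_integrable_def by (subst g)
  have "(LBINT v:{0<..}. ?g v) =
      (a - s) / (2 * s) * exp (- (a + s) * b) + (a + s) / (2 * s) * exp ((s - a) * b) -
      (- heaviside b + (a - s) / (2 * s) * exp (- (a + s) * b) * heaviside (- b)
        + (a + s) / (2 * s) * exp ((s - a) * b) * heaviside b)"
    by (rule FTC) (auto intro!: continuous_intros isCont_o2 [OF _ isCont_std_normal_cdf]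
        simp: rayleigh_density_nonneg std_normal_cdf_nonneg)
  also have "\<dots> = (if b \<ge> 0 then 1 + (a - s) / (2 * s) * exp (- (a + s) * b) else (a + s) / (2 * s) * exp ((s - a) * b))"
    using s by (auto simp: heaviside_def field_simps)
  finally show "(\<integral>v. ?g v \<partial>lborel) = \<dots>"
    unfolding set_lebesgue_integral_def by (subst g)
qed

lemma nn_integral_std_normal_lessThan:
  "(\<integral>\<^sup>+y. ennreal (std_normal_density y) * indicator {..<c} y \<partial>lborel) = ennreal (std_normal_cdf c)"
proof -
  have "{..<c} = {..c} - {c}"
    by auto
  then have "std_normal_cdf c = measure (density lborel std_normal_density) {..<c}"
    by (simp add: std_normal_cdf_def cdf_def measure_Diff_null_set std_normal_singleton_null)
  then show ?thesis
    by (simp add: emeasure_density [symmetric] std_normal.emeasure_eq_measure)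
qed

lemma emeasure_indep_less_std_normal:
  fixes V G :: "'a \<Rightarrow> real"
  assumes "prob_space M"
    and V: "distributed M lborel V f"
    and G: "distributed M lborel G std_normal_density"
    and indep: "prob_space.indep_var M borel V borel G"
    and h [measurable]: "h \<in> borel_measurable borel"
  shows "emeasure M {\<omega> \<in> space M. G \<omega> < h (V \<omega>)} = (\<integral>\<^sup>+v. f v * std_normal_cdf (h v) \<partial>lborel)"
proof -
  interpret prob_space M by fact
  have "indep_var lborel V lborel G"
    using indep by (simp add: indep_var_def indep_vars_def bool.case_eq_if)
  then have joint: "distributed M (lborel \<Otimes>\<^sub>M lborel) (\<lambda>\<omega>. (V \<omega>, G \<omega>))
      (\<lambda>(v, y). f v * ennreal (std_normal_density y))"
    by (intro distributed_joint_indep V G) (simp_all add: lborel.sigma_finite_measure_axioms)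
  define A where "A = {p \<in> space (lborel \<Otimes>\<^sub>M lborel). snd p < h (fst p)}"
  have A [measurable]: "A \<in> sets (lborel \<Otimes>\<^sub>M lborel)"
    unfolding A_def by measurable
  have "{\<omega> \<in> space M. G \<omega> < h (V \<omega>)} = (\<lambda>\<omega>. (V \<omega>, G \<omega>)) -` A \<inter> space M"
    by (auto simp: A_def space_pair_measure)
  also have "emeasure M \<dots> = (\<integral>\<^sup>+p. (case p of (v, y) \<Rightarrow> f v * ennreal (std_normal_density y)) * indicator A p
      \<partial>(lborel \<Otimes>\<^sub>M lborel))"
    by (rule distributed_emeasure [OF joint A])
  also have "\<dots> = (\<integral>\<^sup>+v. \<integral>\<^sup>+y. f v * (ennreal (std_normal_density y) * indicator {..<h v} y) \<partial>lborel \<partial>lborel)"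
    using joint by (subst lborel.nn_integral_fst [symmetric]) (auto simp: A_def space_pair_measure mult.assoc indicator_def
      intro!: nn_integral_cong)
  also have "\<dots> = (\<integral>\<^sup>+v. f v * std_normal_cdf (h v) \<partial>lborel)"
    by (simp add: nn_integral_cmult nn_integral_std_normal_lessThan)
  finally show ?thesis .
qed

theorem lemma4:
  fixes M :: "'a measure" and V G :: "'a \<Rightarrow> real" and \<alpha> \<beta> :: real
  assumes "prob_space M"
    and "distributed M lborel V rayleigh_density"
    and "distributed M lborel G std_normal_density"
    and "prob_space.indep_var M borel V borel G"
  shows "measure M {\<omega> \<in> space M. \<alpha> * V \<omega> + \<beta> / V \<omega> > G \<omega>} =
    (if \<beta> \<ge> 0 then
       1 - (sqrt (\<alpha>\<^sup>2 + 1) - \<alpha>) / (2 * sqrt (\<alpha>\<^sup>2 + 1)) * exp (- \<beta> * (\<alpha> + sqrt (\<alpha>\<^sup>2 + 1)))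
     else
       (sqrt (\<alpha>\<^sup>2 + 1) + \<alpha>) / (2 * sqrt (\<alpha>\<^sup>2 + 1)) * exp (\<beta> / (\<alpha> + sqrt (\<alpha>\<^sup>2 + 1))))"
proof -
  define s where "s = sqrt (\<alpha>\<^sup>2 + 1)"
  let ?g = "\<lambda>v. rayleigh_density v * std_normal_cdf (\<alpha> * v + \<beta> / v)"
  note integral = integral_rayleigh_std_normal_cdf [of \<alpha> \<beta>, folded s_def]
  have "emeasure M {\<omega> \<in> space M. \<alpha> * V \<omega> + \<beta> / V \<omega> > G \<omega>} = (\<integral>\<^sup>+v. ?g v \<partial>lborel)"
    using emeasure_indep_less_std_normal [OF assms, of "\<lambda>v. \<alpha> * v + \<beta> / v"]
    by (simp add: ennreal_mult rayleigh_density_nonneg std_normal_cdf_nonneg)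
  also have "\<dots> = ennreal (\<integral>v. ?g v \<partial>lborel)"
    by (rule nn_integral_eq_integral [OF integral(1)])
       (simp add: rayleigh_density_nonneg std_normal_cdf_nonneg)
  finally have prob: "measure M {\<omega> \<in> space M. \<alpha> * V \<omega> + \<beta> / V \<omega> > G \<omega>} = (\<integral>v. ?g v \<partial>lborel)"
    by (simp add: measure_def integral_nonneg rayleigh_density_nonneg std_normal_cdf_nonneg)
  have "s > \<bar>\<alpha>\<bar>"
    unfolding s_def by (simp add: real_less_rsqrt)
  then have exponent: "exp ((s - \<alpha>) * \<beta>) = exp (\<beta> / (\<alpha> + s))"
    by (simp add: field_simps s_def power2_eq_square)
  show ?thesis
    unfolding prob integral(2) s_def [symmetric] exponent using \<open>s > \<bar>\<alpha>\<bar>\<close>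
    by (auto simp: field_simps)
qed

end
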